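(* Let $H$ be a finitely generated group, let $\phi\in\operatorname{Aut}(H)$ and let $K$ be a proper subgroup of $H$. Let $G=H\ast_{(K,\phi)}=\langle H, t;\ tkt^{-1}=\phi(k),\ k\in K\rangle$. Then $G$ is residually finite if and only if $H$ is residually finite and $K$ is residually separable in $H$.
   Context: For a group $H$, $\phi\in\operatorname{Aut}(H)$ and a proper subgroup $K\lneq H$, the automorphism-induced HNN-extension $H\ast_{(K,\phi)}$ is the group given by the relative presentation $\langle H, t;\ tkt^{-1}=\phi(k),\ k\in K\rangle$. A subgroup $K$ of $H$ is residually separable in $H$ if for every $x\in H\setminus K$ there exists a finite index normal subgroup $N$ of $H$ such that $x\notin KN$. *)

theory Defs
  imports "HOL-Algebra.Coset" "HOL-Algebra.Generated_Groups"
begin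

text \<open>Letters: Inl h (h in H), Inr True = t, Inr False = t^-1.\<close>

definition hnn_words :: "('a, 'b) monoid_scheme \<Rightarrow> ('a + bool) list set" where
  "hnn_words H = lists (Inl ` carrier H \<union> range Inr)"

inductive_set hnn_rel ::
  "('a, 'b) monoid_scheme \<Rightarrow> 'a set \<Rightarrow> ('a \<Rightarrow> 'a) \<Rightarrow> (('a + bool) list \<times> ('a + bool) list) set"
  for H K \<phi> where
  rel_refl: "w \<in> hnn_words H \<Longrightarrow> (w, w) \<in> hnn_rel H K \<phi>"
| rel_sym: "(u, v) \<in> hnn_rel H K \<phi> \<Longrightarrow> (v, u) \<in> hnn_rel H K \<phi>"
| rel_trans: "(u, v) \<in> hnn_rel H K \<phi> \<Longrightarrow> (v, w) \<in> hnn_rel H K \<phi> \<Longrightarrow> (u, w) \<in> hnn_rel H K \<phi>"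
| ctxt: "(u, v) \<in> hnn_rel H K \<phi> \<Longrightarrow> x \<in> hnn_words H \<Longrightarrow> y \<in> hnn_words H \<Longrightarrow>
         (x @ u @ y, x @ v @ y) \<in> hnn_rel H K \<phi>"
| rel_mult: "a \<in> carrier H \<Longrightarrow> b \<in> carrier H \<Longrightarrow>
         ([Inl a, Inl b], [Inl (a \<otimes>\<^bsub>H\<^esub> b)]) \<in> hnn_rel H K \<phi>"
| rel_one: "([Inl \<one>\<^bsub>H\<^esub>], []) \<in> hnn_rel H K \<phi>"
| t_inv1: "([Inr True, Inr False], []) \<in> hnn_rel H K \<phi>"
| t_inv2: "([Inr False, Inr True], []) \<in> hnn_rel H K \<phi>"
| rel_conj: "k \<in> K \<Longrightarrow> ([Inr True, Inl k, Inr False], [Inl (\<phi> k)]) \<in> hnn_rel H K \<phi>"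

definition hnn_mult ::
  "('a, 'b) monoid_scheme \<Rightarrow> 'a set \<Rightarrow> ('a \<Rightarrow> 'a) \<Rightarrow> ('a + bool) list set \<Rightarrow> ('a + bool) list set \<Rightarrow> ('a + bool) list set" where
  "hnn_mult H K \<phi> A B = hnn_rel H K \<phi> `` {w. \<exists>a \<in> A. \<exists>b \<in> B. w = a @ b}"

definition HNN :: "('a, 'b) monoid_scheme \<Rightarrow> 'a set \<Rightarrow> ('a \<Rightarrow> 'a) \<Rightarrow> ('a + bool) list set monoid" where
  "HNN H K \<phi> = \<lparr>carrier = hnn_words H // hnn_rel H K \<phi>,
     mult = hnn_mult H K \<phi>,
     one = hnn_rel H K \<phi> `` {[]}\<rparr>"

definition finite_index_normal :: "('a, 'b) monoid_scheme \<Rightarrow> 'a set \<Rightarrow> bool" where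
  "finite_index_normal G N \<longleftrightarrow> N \<lhd> G \<and> finite (rcosets\<^bsub>G\<^esub> N)"

definition residually_finite :: "('a, 'b) monoid_scheme \<Rightarrow> bool" where
  "residually_finite G \<longleftrightarrow>
     (\<forall>x \<in> carrier G. x \<noteq> \<one>\<^bsub>G\<^esub> \<longrightarrow> (\<exists>N. finite_index_normal G N \<and> x \<notin> N))"

definition residually_separable :: "'a set \<Rightarrow> ('a, 'b) monoid_scheme \<Rightarrow> bool" where
  "residually_separable K H \<longleftrightarrow>
     (\<forall>x \<in> carrier H - K. \<exists>N. finite_index_normal H N \<and> x \<notin> K <#>\<^bsub>H\<^esub> N)"

definition finitely_generated :: "('a, 'b) monoid_scheme \<Rightarrow> bool" where
  "finitely_generated G \<longleftrightarrow> (\<exists>S. finite S \<and> S \<subseteq> carrier G \<and> generate G S = carrier G)"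

end

theory Submission
  imports Defs
begin

text \<open>If \<open>G\<close> is residually finite, then so is its subgroup \<open>H\<close>. For \<open>x \<notin> K\<close> the element
  \<open>t x t\<inverse> \<phi>(x)\<inverse>\<close> is nontrivial: it moves a point of the action of \<open>G\<close> on \<open>H \<times> \<int>/2\<close> in which
  \<open>t\<close> acts by \<open>\<phi>\<close> and flips the bit on the coset \<open>K x\<close>. A finite quotient of \<open>G\<close> in which it
  survives pulls back to a finite-index normal subgroup \<open>P \<le> H\<close> with \<open>x \<notin> K P\<close>, because for
  \<open>x = k m\<close> the element is a conjugate of the same element for \<open>m \<in> P\<close>.

  Conversely, let \<open>w\<close> be a reduced word for a nontrivial element of \<open>G\<close>, with \<open>n\<close> letters
  \<open>t\<^sup>\<plusminus>\<^sup>1\<close>. As \<open>H\<close> is finitely generated, every finite-index normal subgroup contains a fully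
  invariant one (the intersection of the kernels of the finitely many homomorphisms to a fixed
  finite group). So there is a \<open>\<phi>\<close>-invariant finite-index normal subgroup \<open>M\<close> that avoids the
  \<open>H\<close>-part of \<open>w\<close> and whose product with \<open>K\<close> misses every letter \<open>h\<close> occurring in \<open>w\<close> as
  \<open>t h t\<inverse>\<close> (and \<open>\<phi>\<inverse>(h)\<close> for \<open>t\<inverse> h t\<close>). Then \<open>G\<close> acts on the finite set of pairs of a coset
  of \<open>M\<close> and a level in \<open>{0..n}\<close>, \<open>t\<close> permuting the levels according to the double coset \<open>K M y\<close>.
  By the choice of \<open>M\<close>, the level moves needed to lift the base point one level per letter
  \<open>t\<^sup>\<plusminus>\<^sup>1\<close> of \<open>w\<close> never conflict, so \<open>w\<close> acts nontrivially.\<close>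

section \<open>Finite-index normal subgroups\<close>

lemma finite_image_factorizing:
  assumes "finite (g ` A)" and "\<And>a b. a \<in> A \<Longrightarrow> b \<in> A \<Longrightarrow> g a = g b \<Longrightarrow> f a = f b"
  shows "finite (f ` A)"
proof -
  have "f ` A \<subseteq> (\<lambda>y. f (SOME a. a \<in> A \<and> g a = y)) ` g ` A"
  proof
    fix y assume "y \<in> f ` A"
    then obtain a where a: "a \<in> A" "y = f a" by blast
    define b where "b = (SOME b. b \<in> A \<and> g b = g a)"
    have b: "b \<in> A \<and> g b = g a"
      unfolding b_def by (rule someI[of _ a]) (use a in blast)
    then have "y = f b" using a assms(2)[of b a] by simp
    then show "y \<in> (\<lambda>y. f (SOME a. a \<in> A \<and> g a = y)) ` g ` A"
      using a(1) unfolding b_def by blast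
  qed
  then show ?thesis using assms(1) finite_subset by blast
qed

lemma (in group) finite_rcosets_if_factors:
  assumes N: "subgroup N G" and fin: "finite (g ` carrier G)"
    and factors: "\<And>a b. a \<in> carrier G \<Longrightarrow> b \<in> carrier G \<Longrightarrow> g a = g b \<Longrightarrow> a \<otimes> inv b \<in> N"
  shows "finite (rcosets N)"
proof -
  have "rcosets N = (\<lambda>a. N #> a) ` carrier G" unfolding RCOSETS_def by blast
  moreover have "finite ((\<lambda>a. N #> a) ` carrier G)"
  proof (rule finite_image_factorizing[OF fin])
    fix a b assume ab: "a \<in> carrier G" "b \<in> carrier G" "g a = g b"
    then have "a \<in> N #> b" using subgroup.rcos_module_rev[OF N is_group] factors by blast
    then show "N #> a = N #> b" using repr_independence[OF _ ab(2) N] by simp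
  qed
  ultimately show ?thesis by simp
qed

lemma (in group) finite_index_normal_Int:
  assumes "finite_index_normal G A" "finite_index_normal G B"
  shows "finite_index_normal G (A \<inter> B)"
proof -
  have A: "A \<lhd> G" "finite (rcosets A)" and B: "B \<lhd> G" "finite (rcosets B)"
    using assms unfolding finite_index_normal_def by auto
  have AB: "A \<inter> B \<lhd> G" using normal_subgroup_intersect A B by blast
  have "finite (rcosets (A \<inter> B))"
  proof (rule finite_rcosets_if_factors[where g = "\<lambda>a. (A #> a, B #> a)"])
    show "subgroup (A \<inter> B) G" using AB normal_imp_subgroup by blast
    have "(\<lambda>a. (A #> a, B #> a)) ` carrier G \<subseteq> (rcosets A) \<times> (rcosets B)"
      unfolding RCOSETS_def by blast
    then show "finite ((\<lambda>a. (A #> a, B #> a)) ` carrier G)"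
      using A(2) B(2) finite_subset by blast
    fix a b assume ab: "a \<in> carrier G" "b \<in> carrier G" "(A #> a, B #> a) = (A #> b, B #> b)"
    have sA: "subgroup A G" and sB: "subgroup B G" using A(1) B(1) normal_imp_subgroup by blast+
    have "a \<in> A #> b" "a \<in> B #> b"
      using rcos_self[OF ab(1) sA] rcos_self[OF ab(1) sB] ab(3) by simp_all
    then show "a \<otimes> inv b \<in> A \<inter> B"
      using subgroup.rcos_module_imp[OF sA is_group ab(2)] subgroup.rcos_module_imp[OF sB is_group ab(2)]
      by blast
  qed
  then show ?thesis using AB unfolding finite_index_normal_def by blast
qed

lemma (in group) finite_index_normal_Inter:
  assumes "finite \<F>" "\<F> \<noteq> {}" "\<And>N. N \<in> \<F> \<Longrightarrow> finite_index_normal G N"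
  shows "finite_index_normal G (\<Inter>\<F>)"
  using assms by (induction \<F> rule: finite_ne_induct) (auto intro: finite_index_normal_Int)

lemma (in group) finite_index_normal_carrier: "finite_index_normal G (carrier G)"
proof -
  have "finite (rcosets (carrier G))"
    by (rule finite_rcosets_if_factors[OF subgroup_self, where g = "\<lambda>_. ()"]) auto
  then show ?thesis using normal_self unfolding finite_index_normal_def by blast
qed

lemma finite_index_normal_subset_carrier: "finite_index_normal G N \<Longrightarrow> N \<subseteq> carrier G"
  unfolding finite_index_normal_def using normal_imp_subgroup subgroup.subset by blast

lemma finite_index_normal_vimage:
  assumes "group_hom G G' h" and N: "finite_index_normal G' N"
  shows "finite_index_normal G {x \<in> carrier G. h x \<in> N}"
proof -
  interpret group_hom G G' h by fact
  have Nn: "N \<lhd> G'" and Nf: "finite (rcosets\<^bsub>G'\<^esub> N)"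
    using N unfolding finite_index_normal_def by auto
  have sN: "subgroup N G'" using Nn normal_imp_subgroup by blast
  let ?P = "{x \<in> carrier G. h x \<in> N}"
  have sP: "subgroup ?P G"
  proof (rule G.subgroupI)
    have "\<one>\<^bsub>G\<^esub> \<in> ?P" using subgroup.one_closed[OF sN] by simp
    then show "?P \<noteq> {}" by blast
  qed (auto intro: subgroup.m_closed[OF sN] subgroup.m_inv_closed[OF sN])
  have nP: "?P \<lhd> G"
  proof (rule G.normal_invI[OF sP])
    fix x y assume x: "x \<in> carrier G" and y: "y \<in> ?P"
    have "h x \<otimes>\<^bsub>G'\<^esub> h y \<otimes>\<^bsub>G'\<^esub> inv\<^bsub>G'\<^esub> h x \<in> N"
      by (rule H.normal_invE(2)[OF Nn]) (use x y in simp_all)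
    then show "x \<otimes>\<^bsub>G\<^esub> y \<otimes>\<^bsub>G\<^esub> inv\<^bsub>G\<^esub> x \<in> ?P" using x y by simp
  qed
  have "finite (rcosets\<^bsub>G\<^esub> ?P)"
  proof (rule G.finite_rcosets_if_factors[OF sP, where g = "\<lambda>a. N #>\<^bsub>G'\<^esub> h a"])
    have "(\<lambda>a. N #>\<^bsub>G'\<^esub> h a) ` carrier G \<subseteq> rcosets\<^bsub>G'\<^esub> N"
      using H.rcosetsI[OF subgroup.subset[OF sN]] by auto
    then show "finite ((\<lambda>a. N #>\<^bsub>G'\<^esub> h a) ` carrier G)" using Nf finite_subset by blast
    fix a b assume ab: "a \<in> carrier G" "b \<in> carrier G" "N #>\<^bsub>G'\<^esub> h a = N #>\<^bsub>G'\<^esub> h b"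
    then have "h a \<in> N #>\<^bsub>G'\<^esub> h b" using H.rcos_self[OF _ sN, of "h a"] by simp
    then show "a \<otimes>\<^bsub>G\<^esub> inv\<^bsub>G\<^esub> b \<in> ?P"
      using subgroup.rcos_module_imp[OF sN H.is_group, of "h b" "h a"] ab by simp
  qed
  then show ?thesis using nP unfolding finite_index_normal_def by blast
qed

lemma (in group) finite_index_normal_action_kernel:
  assumes fin: "finite X"
    and closed: "\<And>g x. g \<in> carrier G \<Longrightarrow> x \<in> X \<Longrightarrow> \<alpha> g x \<in> X"
    and mult: "\<And>g h x. g \<in> carrier G \<Longrightarrow> h \<in> carrier G \<Longrightarrow> x \<in> X \<Longrightarrow> \<alpha> (g \<otimes> h) x = \<alpha> g (\<alpha> h x)"
    and one: "\<And>x. x \<in> X \<Longrightarrow> \<alpha> \<one> x = x"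
  shows "finite_index_normal G {g \<in> carrier G. \<forall>x\<in>X. \<alpha> g x = x}"
proof -
  let ?N = "{g \<in> carrier G. \<forall>x\<in>X. \<alpha> g x = x}"
  have inv: "\<alpha> (inv g) (\<alpha> g x) = x" "\<alpha> g (\<alpha> (inv g) x) = x" if "g \<in> carrier G" "x \<in> X" for g x
    using that mult[of "inv g" g x] mult[of g "inv g" x] one by simp_all
  have sN: "subgroup ?N G"
  proof (rule subgroupI)
    fix g assume "g \<in> ?N"
    then show "inv g \<in> ?N" using inv(1) by fastforce
  qed (auto simp: one mult)
  have nN: "?N \<lhd> G"
  proof (rule normal_invI[OF sN])
    fix g n assume "g \<in> carrier G" "n \<in> ?N"
    then show "g \<otimes> n \<otimes> inv g \<in> ?N" using inv(2) by (simp add: mult closed)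
  qed
  have "finite (rcosets ?N)"
  proof (rule finite_rcosets_if_factors[OF sN, where g = "\<lambda>g. restrict (\<alpha> g) X"])
    have "(\<lambda>g. restrict (\<alpha> g) X) ` carrier G \<subseteq> Pi\<^sub>E X (\<lambda>_. X)" using closed by auto
    then show "finite ((\<lambda>g. restrict (\<alpha> g) X) ` carrier G)"
      using finite_PiE[OF fin, of "\<lambda>_. X"] fin finite_subset by blast
    fix a b assume ab: "a \<in> carrier G" "b \<in> carrier G" "restrict (\<alpha> a) X = restrict (\<alpha> b) X"
    have "\<alpha> a (\<alpha> (inv b) x) = x" if "x \<in> X" for x
      using ab inv(2)[OF ab(2) that] closed[OF _ that, of "inv b"] by (metis inv_closed restrict_apply')
    then show "a \<otimes> inv b \<in> ?N" using ab(1,2) by (simp add: mult)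
  qed
  then show ?thesis using nN unfolding finite_index_normal_def by blast
qed

lemma hom_eq_on_generate:
  assumes "group_hom G Q f" "group_hom G Q f'" "S \<subseteq> carrier G"
    and eq: "\<And>s. s \<in> S \<Longrightarrow> f s = f' s" and g: "g \<in> generate G S"
  shows "f g = f' g"
proof -
  interpret f: group_hom G Q f by fact
  interpret f': group_hom G Q f' by fact
  show ?thesis
    using g
  proof (induction rule: generate.induct)
    case (inv h)
    then have "h \<in> carrier G" using assms(3) by blast
    then show ?case using eq[OF inv] by simp
  next
    case (eng h1 h2)
    then show ?case using f.G.generate_in_carrier[OF assms(3)] by simp
  qed (simp_all add: eq)
qed

lemma finite_index_normal_kernel:
  assumes f: "group_hom G Q f" and Q: "finite (carrier Q)"
  shows "finite_index_normal G (kernel G Q f)"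
proof -
  interpret group_hom G Q f by fact
  have "finite (rcosets\<^bsub>Q\<^esub> {\<one>\<^bsub>Q\<^esub>})"
    using H.rcosets_subset_PowG[OF H.triv_subgroup] Q finite_subset by blast
  then have "finite_index_normal Q {\<one>\<^bsub>Q\<^esub>}"
    using H.one_is_normal unfolding finite_index_normal_def by blast
  from finite_index_normal_vimage[OF f this] show ?thesis unfolding kernel_def by simp
qed

lemma finite_kernels_if_finitely_generated:
  assumes G: "group G" and Q: "group Q" and fg: "finitely_generated G" and fin: "finite (carrier Q)"
  shows "finite ((\<lambda>f. kernel G Q f) ` hom G Q)"
proof -
  obtain S where S: "finite S" "S \<subseteq> carrier G" "generate G S = carrier G"
    using fg unfolding finitely_generated_def by blast
  show ?thesis
  proof (rule finite_image_factorizing[where g = "\<lambda>f. restrict f S"])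
    have "(\<lambda>f. restrict f S) ` hom G Q \<subseteq> Pi\<^sub>E S (\<lambda>_. carrier Q)"
      using S(2) by (auto simp: hom_in_carrier)
    then show "finite ((\<lambda>f. restrict f S) ` hom G Q)"
      using finite_PiE[OF S(1), of "\<lambda>_. carrier Q"] fin finite_subset by blast
    fix f f' assume f: "f \<in> hom G Q" "f' \<in> hom G Q" "restrict f S = restrict f' S"
    have hom: "group_hom G Q f" "group_hom G Q f'"
      using f(1,2) G Q by (simp_all add: group_hom_def group_hom_axioms_def)
    have "f s = f' s" if "s \<in> S" for s using f(3) that by (metis restrict_apply')
    then have "f x = f' x" if "x \<in> carrier G" for x
      using hom_eq_on_generate[OF hom S(2)] S(3) that by blast
    then show "kernel G Q f = kernel G Q f'" unfolding kernel_def by auto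
  qed
qed

lemma (in group) finite_index_normal_fully_invariant_subgroup:
  assumes fg: "finitely_generated G" and N: "finite_index_normal G N"
  shows "\<exists>M. finite_index_normal G M \<and> M \<subseteq> N \<and> (\<forall>\<theta>\<in>hom G G. \<theta> ` M \<subseteq> M)"
proof -
  interpret N: normal N G using N unfolding finite_index_normal_def by blast
  let ?Q = "G Mod N"
  have Q: "group ?Q" by (rule N.factorgroup_is_group)
  have Q_finite: "finite (carrier ?Q)"
    using N unfolding finite_index_normal_def FactGroup_def by simp
  define M where "M = \<Inter>((\<lambda>f. kernel G ?Q f) ` hom G ?Q)"
  have "finite_index_normal G (kernel G ?Q f)" if "f \<in> hom G ?Q" for f
  proof -
    have "group_hom G ?Q f" using that Q is_group by (simp add: group_hom_def group_hom_axioms_def)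
    then show ?thesis using finite_index_normal_kernel Q_finite by blast
  qed
  then have "finite_index_normal G M"
    unfolding M_def using finite_kernels_if_finitely_generated[OF is_group Q fg Q_finite] N.r_coset_hom_Mod
    by (intro finite_index_normal_Inter) auto
  moreover have "M \<subseteq> N"
  proof
    fix x assume "x \<in> M"
    then have "x \<in> kernel G ?Q (\<lambda>a. N #> a)" using N.r_coset_hom_Mod unfolding M_def by blast
    then have "N #> x = N" "x \<in> carrier G" unfolding kernel_def by auto
    then show "x \<in> N" using rcos_self[OF _ N.subgroup_axioms] by metis
  qed
  moreover have "\<theta> ` M \<subseteq> M" if \<theta>: "\<theta> \<in> hom G G" for \<theta>
  proof
    fix y assume "y \<in> \<theta> ` M"
    then obtain x where x: "x \<in> M" "y = \<theta> x" by blast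
    have "x \<in> kernel G ?Q (f \<circ> \<theta>)" if "f \<in> hom G ?Q" for f
      using x(1) Group.hom_compose[OF \<theta> that] unfolding M_def by blast
    then show "y \<in> M" using x hom_in_carrier[OF \<theta>] unfolding M_def kernel_def by auto
  qed
  ultimately show ?thesis by blast
qed

lemma residually_finite_if_inj_hom:
  assumes h: "group_hom G G' h" and inj: "inj_on h (carrier G)" and RF: "residually_finite G'"
  shows "residually_finite G"
  unfolding residually_finite_def
proof (intro ballI impI)
  interpret group_hom G G' h by fact
  fix x assume x: "x \<in> carrier G" "x \<noteq> \<one>\<^bsub>G\<^esub>"
  then have "h x \<noteq> \<one>\<^bsub>G'\<^esub>" using inj inj_on_one_iff by blast
  then obtain N where "finite_index_normal G' N" "h x \<notin> N"
    using RF x(1) unfolding residually_finite_def by auto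
  then show "\<exists>N. finite_index_normal G N \<and> x \<notin> N"
    using finite_index_normal_vimage[OF h] by blast
qed

lemma (in group) mult_mem_rcos_iff:
  assumes K: "subgroup K G" and "k \<in> K" "y \<in> carrier G" "x \<in> carrier G"
  shows "k \<otimes> y \<in> K #> x \<longleftrightarrow> y \<in> K #> x"
proof -
  have k: "k \<in> carrier G" using assms subgroup.subset by blast
  have "k \<otimes> y \<in> K #> x \<longleftrightarrow> k \<otimes> (y \<otimes> inv x) \<in> K"
    using subgroup.rcos_module[OF K is_group] assms k by (simp add: m_assoc)
  also have "\<dots> \<longleftrightarrow> y \<otimes> inv x \<in> K"
  proof
    assume "k \<otimes> (y \<otimes> inv x) \<in> K"
    then have "inv k \<otimes> (k \<otimes> (y \<otimes> inv x)) \<in> K"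
      using subgroup.m_closed[OF K] subgroup.m_inv_closed[OF K assms(2)] by blast
    then show "y \<otimes> inv x \<in> K" using k assms by (simp add: m_assoc[symmetric])
  next
    assume "y \<otimes> inv x \<in> K"
    then show "k \<otimes> (y \<otimes> inv x) \<in> K" using subgroup.m_closed[OF K assms(2)] by blast
  qed
  also have "\<dots> \<longleftrightarrow> y \<in> K #> x" using subgroup.rcos_module[OF K is_group] assms by simp
  finally show ?thesis .
qed

lemma (in group) normal_lcos_rcos:
  assumes "N \<lhd> G" "h \<in> carrier G" "a \<in> carrier G"
  shows "h <# (N #> a) = N #> (h \<otimes> a)"
proof -
  have N: "N \<subseteq> carrier G" using assms(1) normal_imp_subgroup subgroup.subset by blast
  have "h <# (N #> a) = (h <# N) #> a"
    using assms N by (force simp add: l_coset_def r_coset_def m_assoc)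
  also have "h <# N = N #> h" using normal.coset_eq[OF assms(1)] assms(2) by blast
  finally show ?thesis using coset_mult_assoc[OF N assms(2,3)] by simp
qed

lemma (in group) set_mult_lcos_absorb:
  assumes "subgroup K G" "k \<in> K" "Y \<subseteq> carrier G"
  shows "K <#> (k <# Y) = K <#> Y"
proof -
  have K: "K \<subseteq> carrier G" and k: "k \<in> carrier G" using assms subgroup.subset by blast+
  have "K <#> (k <# Y) = (K <#> {k}) <#> Y"
    using set_mult_assoc[OF K _ assms(3), of "{k}"] k by (simp add: l_coset_eq_set_mult)
  also have "K <#> {k} = K" using subgroup.rcos_const[OF assms(1) is_group assms(2)] by (simp add: r_coset_eq_set_mult)
  finally show ?thesis .
qed

lemma (in group) double_coset_mult_ne:
  assumes K: "subgroup K G" and M: "M \<lhd> G"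
    and h: "h \<in> carrier G" "h \<notin> K <#> M" and y: "y \<in> carrier G"
  shows "K <#> (M #> (h \<otimes> y)) \<noteq> K <#> (M #> y)"
proof
  assume eq: "K <#> (M #> (h \<otimes> y)) = K <#> (M #> y)"
  have sM: "subgroup M G" using M normal_imp_subgroup by blast
  have "\<one> \<otimes> (\<one> \<otimes> (h \<otimes> y)) \<in> K <#> (M #> (h \<otimes> y))"
    unfolding set_mult_def r_coset_def using subgroup.one_closed[OF K] subgroup.one_closed[OF sM] by blast
  then have "h \<otimes> y \<in> K <#> (M #> y)" using eq h y by simp
  then obtain k m where km: "k \<in> K" "m \<in> M" "h \<otimes> y = k \<otimes> (m \<otimes> y)"
    unfolding set_mult_def r_coset_def by blast
  have "k \<in> carrier G" "m \<in> carrier G" using km K sM subgroup.subset by blast+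
  then have "h = k \<otimes> m" using km(3) h y by (metis m_assoc m_closed right_cancel)
  then show False using h(2) km unfolding set_mult_def by blast
qed

lemma bij_betw_extending_partial_bij:
  assumes A: "finite A" and P: "P \<subseteq> A \<times> A"
    and sv: "single_valued P" and sv': "single_valued (P\<inverse>)"
  shows "\<exists>\<sigma>. bij_betw \<sigma> A A \<and> (\<forall>(a, b)\<in>P. \<sigma> a = b)"
proof -
  define f where "f a = (THE b. (a, b) \<in> P)" for a
  have f: "f a = b" if "(a, b) \<in> P" for a b
    unfolding f_def by (rule the_equality) (use that sv in \<open>auto simp: single_valued_def\<close>)
  have "bij_betw f (Domain P) (Range P)"
  proof (rule bij_betwI')
    fix x y assume "x \<in> Domain P" "y \<in> Domain P"
    then obtain b\<^sub>1 b\<^sub>2 where "(x, b\<^sub>1) \<in> P" "(y, b\<^sub>2) \<in> P" by blast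
    then show "(f x = f y) = (x = y)" using f sv sv' by (auto simp: single_valued_def)
  qed (use f in force)+
  moreover have "Domain P \<subseteq> A" "Range P \<subseteq> A" using P by auto
  ultimately have "card (A - Domain P) = card (A - Range P)"
    using bij_betw_same_card A finite_subset card_Diff_subset by metis
  then obtain g where g: "bij_betw g (A - Domain P) (A - Range P)"
    using finite_same_card_bij A by blast
  define \<sigma> where "\<sigma> x = (if x \<in> Domain P then f x else g x)" for x
  have "bij_betw \<sigma> (Domain P \<union> (A - Domain P)) (Range P \<union> (A - Range P))"
  proof (rule bij_betw_combine)
    show "bij_betw \<sigma> (Domain P) (Range P)"
      using \<open>bij_betw f (Domain P) (Range P)\<close> by (rule bij_betw_cong[THEN iffD1, rotated]) (simp add: \<sigma>_def)
    show "bij_betw \<sigma> (A - Domain P) (A - Range P)"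
      using g by (rule bij_betw_cong[THEN iffD1, rotated]) (simp add: \<sigma>_def)
  qed auto
  moreover have "Domain P \<union> (A - Domain P) = A" "Range P \<union> (A - Range P) = A" using P by auto
  ultimately have "bij_betw \<sigma> A A" by simp
  moreover have "\<forall>(a, b)\<in>P. \<sigma> a = b" using f unfolding \<sigma>_def by (auto intro: DomainI)
  ultimately show ?thesis by blast
qed

section \<open>The HNN extension as a group\<close>

locale hnn = group H for H (structure) +
  fixes K :: "'a set" and \<phi> :: "'a \<Rightarrow> 'a"
  assumes subgroup_K: "subgroup K H" and \<phi>_iso: "\<phi> \<in> iso H H"
begin

abbreviation "W \<equiv> hnn_words H"
abbreviation "R \<equiv> hnn_rel H K \<phi>"
abbreviation "G \<equiv> HNN H K \<phi>"
abbreviation "cls u \<equiv> R `` {u}"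

definition \<psi> :: "'a \<Rightarrow> 'a" where "\<psi> = inv_into (carrier H) \<phi>"

lemma K_subset: "K \<subseteq> carrier H"
  using subgroup_K subgroup.subset by blast

lemma \<phi>_hom: "group_hom H H \<phi>"
  using \<phi>_iso is_group unfolding iso_def group_hom_def group_hom_axioms_def by blast

lemma \<psi>_iso: "\<psi> \<in> iso H H"
  unfolding \<psi>_def using iso_set_sym[OF \<phi>_iso] .

lemma \<psi>_hom: "group_hom H H \<psi>"
  using \<psi>_iso is_group unfolding iso_def group_hom_def group_hom_axioms_def by blast

lemma \<phi>_bij: "bij_betw \<phi> (carrier H) (carrier H)"
  using \<phi>_iso unfolding iso_def by blast

lemma \<phi>_closed [simp]: "x \<in> carrier H \<Longrightarrow> \<phi> x \<in> carrier H"
  using group_hom.hom_closed[OF \<phi>_hom] .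

lemma \<psi>_closed [simp]: "x \<in> carrier H \<Longrightarrow> \<psi> x \<in> carrier H"
  using group_hom.hom_closed[OF \<psi>_hom] .

lemma \<phi>_\<psi> [simp]: "x \<in> carrier H \<Longrightarrow> \<phi> (\<psi> x) = x"
  using \<phi>_bij unfolding \<psi>_def bij_betw_def by (simp add: f_inv_into_f)

lemma \<psi>_\<phi> [simp]: "x \<in> carrier H \<Longrightarrow> \<psi> (\<phi> x) = x"
  using \<phi>_bij unfolding \<psi>_def bij_betw_def by (simp add: inv_into_f_f)

lemma words_Nil [simp]: "[] \<in> W"
  by (simp add: hnn_words_def)

lemma words_append [simp]: "u @ v \<in> W \<longleftrightarrow> u \<in> W \<and> v \<in> W"
  by (simp add: hnn_words_def)

lemma words_Inl [simp]: "Inl h # w \<in> W \<longleftrightarrow> h \<in> carrier H \<and> w \<in> W"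
  by (auto simp: hnn_words_def)

lemma words_Inr [simp]: "Inr b # w \<in> W \<longleftrightarrow> w \<in> W"
  by (auto simp: hnn_words_def)

lemma hnn_rel_words: "(u, v) \<in> R \<Longrightarrow> u \<in> W \<and> v \<in> W"
  by (induction rule: hnn_rel.induct) (auto simp: K_subset[THEN subsetD])

lemma equiv_hnn_rel: "equiv W R"
proof (rule equivI)
  show "refl_on W R" unfolding refl_on_def using hnn_rel_words hnn_rel.rel_refl by blast
  show "R \<subseteq> W \<times> W" using hnn_rel_words by auto
  show "sym R" unfolding sym_def using hnn_rel.rel_sym by blast
  show "trans R" unfolding trans_def using hnn_rel.rel_trans by blast
qed

lemma hnn_rel_append: "(u, u') \<in> R \<Longrightarrow> (v, v') \<in> R \<Longrightarrow> (u @ v, u' @ v') \<in> R"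
proof -
  assume u: "(u, u') \<in> R" and v: "(v, v') \<in> R"
  have "([] @ u @ v, [] @ u' @ v) \<in> R" using hnn_rel.ctxt[OF u, of "[]" v] hnn_rel_words[OF v] by simp
  moreover have "(u' @ v @ [], u' @ v' @ []) \<in> R"
    using hnn_rel.ctxt[OF v, of u' "[]"] hnn_rel_words[OF u] by simp
  ultimately show ?thesis using hnn_rel.rel_trans by fastforce
qed

lemma carrier_HNN: "carrier G = W // R"
  by (simp add: HNN_def)

lemma one_HNN: "\<one>\<^bsub>G\<^esub> = cls []"
  by (simp add: HNN_def)

lemma cls_mult: "u \<in> W \<Longrightarrow> v \<in> W \<Longrightarrow> cls u \<otimes>\<^bsub>G\<^esub> cls v = cls (u @ v)"
proof -
  assume uv: "u \<in> W" "v \<in> W"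
  have "u \<in> cls u" "v \<in> cls v" using uv hnn_rel.rel_refl by auto
  moreover have "(u @ v, x) \<in> R" if "(u, a) \<in> R" "(v, b) \<in> R" "(a @ b, x) \<in> R" for a b x
    using that hnn_rel_append hnn_rel.rel_trans by blast
  ultimately show ?thesis by (auto simp: HNN_def hnn_mult_def)
qed

lemma cls_in_carrier: "u \<in> W \<Longrightarrow> cls u \<in> carrier G"
  by (simp add: carrier_HNN quotientI)

lemma cls_eq_iff: "u \<in> W \<Longrightarrow> v \<in> W \<Longrightarrow> cls u = cls v \<longleftrightarrow> (u, v) \<in> R"
  using eq_equiv_class_iff[OF equiv_hnn_rel] by blast

lemma carrier_HNN_cases:
  assumes "A \<in> carrier G" obtains u where "u \<in> W" "A = cls u"
  using assms unfolding carrier_HNN by (elim quotientE) blast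

fun letter_inv :: "'a + bool \<Rightarrow> 'a + bool" where
  "letter_inv (Inl h) = Inl (inv h)"
| "letter_inv (Inr b) = Inr (\<not> b)"

definition word_inv :: "('a + bool) list \<Rightarrow> ('a + bool) list" where
  "word_inv w = rev (map letter_inv w)"

lemma word_inv_words: "w \<in> W \<Longrightarrow> word_inv w \<in> W"
proof (induction w)
  case (Cons l w)
  then show ?case by (cases l) (auto simp: word_inv_def)
qed (simp add: word_inv_def)

lemma letter_inv_cancel: "[l] \<in> W \<Longrightarrow> ([letter_inv l, l], []) \<in> R"
proof (cases l)
  case (Inl h)
  assume "[l] \<in> W"
  then have h: "h \<in> carrier H" using Inl by simp
  have "([Inl (inv h), Inl h], [Inl (inv h \<otimes> h)]) \<in> R" using hnn_rel.rel_mult[of "inv h" H h K \<phi>] h by simp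
  moreover have "([Inl (inv h \<otimes> h)], []) \<in> R" using h hnn_rel.rel_one by simp
  ultimately show ?thesis using Inl hnn_rel.rel_trans by fastforce
next
  case (Inr b)
  then show ?thesis using hnn_rel.t_inv1 hnn_rel.t_inv2 by (cases b) auto
qed

lemma word_inv_cancel: "w \<in> W \<Longrightarrow> (word_inv w @ w, []) \<in> R"
proof (induction w)
  case Nil
  then show ?case using hnn_rel.rel_refl[of "[]" H K \<phi>] by (simp add: word_inv_def)
next
  case (Cons l w)
  have lw: "[l] \<in> W" "w \<in> W" using Cons.prems by (cases l; simp)+
  have "(word_inv w @ [letter_inv l, l] @ w, word_inv w @ [] @ w) \<in> R"
    using hnn_rel.ctxt[OF letter_inv_cancel[OF lw(1)] word_inv_words[OF lw(2)] lw(2)] .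
  then have "(word_inv (l # w) @ l # w, word_inv w @ w) \<in> R" by (simp add: word_inv_def)
  then show ?case using Cons.IH lw(2) hnn_rel.rel_trans by blast
qed

lemma cls_word_inv_mult: "u \<in> W \<Longrightarrow> cls (word_inv u) \<otimes>\<^bsub>G\<^esub> cls u = \<one>\<^bsub>G\<^esub>"
  using cls_mult[OF word_inv_words] word_inv_cancel cls_eq_iff[of "word_inv u @ u" "[]"]
    word_inv_words one_HNN by simp

lemma group_HNN: "group G"
proof (rule groupI)
  fix x y assume "x \<in> carrier G" "y \<in> carrier G"
  then show "x \<otimes>\<^bsub>G\<^esub> y \<in> carrier G"
    by (elim carrier_HNN_cases) (simp add: cls_mult cls_in_carrier)
next
  show "\<one>\<^bsub>G\<^esub> \<in> carrier G" using one_HNN cls_in_carrier by simp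
next
  fix x y z assume "x \<in> carrier G" "y \<in> carrier G" "z \<in> carrier G"
  then show "x \<otimes>\<^bsub>G\<^esub> y \<otimes>\<^bsub>G\<^esub> z = x \<otimes>\<^bsub>G\<^esub> (y \<otimes>\<^bsub>G\<^esub> z)"
    by (elim carrier_HNN_cases) (simp add: cls_mult)
next
  fix x assume "x \<in> carrier G"
  then show "\<one>\<^bsub>G\<^esub> \<otimes>\<^bsub>G\<^esub> x = x"
    by (elim carrier_HNN_cases) (simp add: cls_mult one_HNN)
next
  fix x assume "x \<in> carrier G"
  then obtain u where u: "u \<in> W" "x = cls u" by (elim carrier_HNN_cases)
  then show "\<exists>y\<in>carrier G. y \<otimes>\<^bsub>G\<^esub> x = \<one>\<^bsub>G\<^esub>"
    using cls_word_inv_mult cls_in_carrier[OF word_inv_words] by blast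
qed

lemma inv_cls: "u \<in> W \<Longrightarrow> inv\<^bsub>G\<^esub> (cls u) = cls (word_inv u)"
  using group.inv_equality[OF group_HNN cls_word_inv_mult] cls_in_carrier word_inv_words by blast

definition \<iota> :: "'a \<Rightarrow> ('a + bool) list set" where "\<iota> h = cls [Inl h]"

definition \<tau> :: "('a + bool) list set" where "\<tau> = cls [Inr True]"

lemma \<iota>_hom: "group_hom H G \<iota>"
proof -
  have "\<iota> (a \<otimes> b) = \<iota> a \<otimes>\<^bsub>G\<^esub> \<iota> b" if "a \<in> carrier H" "b \<in> carrier H" for a b
  proof -
    have "cls [Inl a, Inl b] = cls [Inl (a \<otimes> b)]"
      using hnn_rel.rel_mult[OF that] cls_eq_iff that by simp
    then show ?thesis unfolding \<iota>_def using cls_mult[of "[Inl a]" "[Inl b]"] that by simp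
  qed
  then have "\<iota> \<in> hom H G" unfolding hom_def \<iota>_def by (auto intro: cls_in_carrier)
  then show ?thesis using is_group group_HNN by (simp add: group_hom_def group_hom_axioms_def)
qed

lemma \<tau>_in_carrier: "\<tau> \<in> carrier G"
  unfolding \<tau>_def by (simp add: cls_in_carrier)

lemma inv_\<tau>: "inv\<^bsub>G\<^esub> \<tau> = cls [Inr False]"
  unfolding \<tau>_def by (simp add: inv_cls word_inv_def)

lemma \<tau>_conj:
  assumes "k \<in> K" shows "\<tau> \<otimes>\<^bsub>G\<^esub> \<iota> k \<otimes>\<^bsub>G\<^esub> inv\<^bsub>G\<^esub> \<tau> = \<iota> (\<phi> k)"
proof -
  have k: "k \<in> carrier H" using assms K_subset by blast
  have "([Inr True, Inl k, Inr False], [Inl (\<phi> k)]) \<in> R" by (rule hnn_rel.rel_conj[OF assms])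
  then have "cls [Inr True, Inl k, Inr False] = cls [Inl (\<phi> k)]" using cls_eq_iff k by simp
  then show ?thesis unfolding inv_\<tau> unfolding \<tau>_def \<iota>_def using k by (simp add: cls_mult)
qed

end

section \<open>Actions of the HNN extension on sets\<close>

fun word_act :: "('a \<Rightarrow> 'x \<Rightarrow> 'x) \<Rightarrow> ('x \<Rightarrow> 'x) \<Rightarrow> ('x \<Rightarrow> 'x) \<Rightarrow> ('a + bool) list \<Rightarrow> 'x \<Rightarrow> 'x" where
  "word_act \<alpha> T T' [] p = p"
| "word_act \<alpha> T T' (Inl h # w) p = \<alpha> h (word_act \<alpha> T T' w p)"
| "word_act \<alpha> T T' (Inr b # w) p = (if b then T else T') (word_act \<alpha> T T' w p)"

lemma word_act_append: "word_act \<alpha> T T' (u @ v) p = word_act \<alpha> T T' u (word_act \<alpha> T T' v p)"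
proof (induction u arbitrary: p)
  case (Cons l u)
  then show ?case by (cases l) auto
qed simp

locale hnn_action = hnn +
  fixes X :: "'x set" and \<alpha> :: "'a \<Rightarrow> 'x \<Rightarrow> 'x" and T T' :: "'x \<Rightarrow> 'x"
  assumes \<alpha>_closed: "h \<in> carrier H \<Longrightarrow> p \<in> X \<Longrightarrow> \<alpha> h p \<in> X"
    and \<alpha>_mult: "h \<in> carrier H \<Longrightarrow> h' \<in> carrier H \<Longrightarrow> p \<in> X \<Longrightarrow> \<alpha> (h \<otimes> h') p = \<alpha> h (\<alpha> h' p)"
    and \<alpha>_one: "p \<in> X \<Longrightarrow> \<alpha> \<one> p = p"
    and T_closed: "p \<in> X \<Longrightarrow> T p \<in> X"
    and T'_closed: "p \<in> X \<Longrightarrow> T' p \<in> X"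
    and T_T': "p \<in> X \<Longrightarrow> T (T' p) = p"
    and T'_T: "p \<in> X \<Longrightarrow> T' (T p) = p"
    and T_conj: "k \<in> K \<Longrightarrow> p \<in> X \<Longrightarrow> T (\<alpha> k (T' p)) = \<alpha> (\<phi> k) p"
begin

abbreviation "act \<equiv> word_act \<alpha> T T'"

lemma act_closed: "w \<in> W \<Longrightarrow> p \<in> X \<Longrightarrow> act w p \<in> X"
proof (induction w arbitrary: p)
  case (Cons l w)
  then show ?case by (cases l) (auto simp: \<alpha>_closed T_closed T'_closed)
qed simp

lemma act_hnn_rel: "(u, v) \<in> R \<Longrightarrow> p \<in> X \<Longrightarrow> act u p = act v p"
proof (induction arbitrary: p rule: hnn_rel.induct)
  case (ctxt u v x y)
  then show ?case using act_closed[of y p] by (simp add: word_act_append)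
qed (simp_all add: \<alpha>_mult \<alpha>_one T_T' T'_T T_conj)

definition G_act :: "('a + bool) list set \<Rightarrow> 'x \<Rightarrow> 'x" where
  "G_act A = act (SOME w. w \<in> A)"

lemma G_act_cls: "u \<in> W \<Longrightarrow> p \<in> X \<Longrightarrow> G_act (cls u) p = act u p"
proof -
  assume u: "u \<in> W" and p: "p \<in> X"
  then have "(SOME w. w \<in> cls u) \<in> cls u" using hnn_rel.rel_refl by (metis Image_singleton_iff someI)
  then show ?thesis unfolding G_act_def using act_hnn_rel p by (metis Image_singleton_iff)
qed

lemma G_act_closed: "A \<in> carrier G \<Longrightarrow> p \<in> X \<Longrightarrow> G_act A p \<in> X"
  by (elim carrier_HNN_cases) (simp add: G_act_cls act_closed)

lemma G_act_mult:
  "A \<in> carrier G \<Longrightarrow> B \<in> carrier G \<Longrightarrow> p \<in> X \<Longrightarrow> G_act (A \<otimes>\<^bsub>G\<^esub> B) p = G_act A (G_act B p)"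
  by (elim carrier_HNN_cases) (simp add: G_act_cls act_closed cls_mult word_act_append)

lemma G_act_one: "p \<in> X \<Longrightarrow> G_act \<one>\<^bsub>G\<^esub> p = p"
  by (simp add: one_HNN G_act_cls)

lemma G_act_\<iota>: "h \<in> carrier H \<Longrightarrow> p \<in> X \<Longrightarrow> G_act (\<iota> h) p = \<alpha> h p"
  unfolding \<iota>_def by (simp add: G_act_cls)

lemma G_act_\<tau>: "p \<in> X \<Longrightarrow> G_act \<tau> p = T p"
  unfolding \<tau>_def by (simp add: G_act_cls)

lemma G_act_inv_\<tau>: "p \<in> X \<Longrightarrow> G_act (inv\<^bsub>G\<^esub> \<tau>) p = T' p"
  unfolding inv_\<tau> by (simp add: G_act_cls)

lemma finite_index_normal_G_act_kernel:
  "finite X \<Longrightarrow> finite_index_normal G {A \<in> carrier G. \<forall>p\<in>X. G_act A p = p}"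
  using group.finite_index_normal_action_kernel[OF group_HNN] G_act_closed G_act_mult G_act_one
  by blast

end

section \<open>Residual finiteness passes to \<open>H\<close> and separates \<open>K\<close>\<close>

context hnn
begin

text \<open>\<open>t\<close> flips the bit on the coset \<open>K x\<close>, which is stable under left multiplication by \<open>K\<close>.\<close>
definition flip_T :: "'a \<Rightarrow> 'a \<times> bool \<Rightarrow> 'a \<times> bool" where
  "flip_T x p = (\<phi> (fst p), snd p \<noteq> (fst p \<in> K #> x))"

definition flip_T' :: "'a \<Rightarrow> 'a \<times> bool \<Rightarrow> 'a \<times> bool" where
  "flip_T' x p = (\<psi> (fst p), snd p \<noteq> (\<psi> (fst p) \<in> K #> x))"

lemma flip_action:
  assumes x: "x \<in> carrier H"
  shows "hnn_action H K \<phi> (carrier H \<times> UNIV) (\<lambda>h p. (h \<otimes> fst p, snd p)) (flip_T x) (flip_T' x)"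
proof (unfold_locales)
  fix k p assume k: "k \<in> K" and p: "p \<in> carrier H \<times> (UNIV :: bool set)"
  have kc: "k \<in> carrier H" using k K_subset by blast
  show "flip_T x (k \<otimes> fst (flip_T' x p), snd (flip_T' x p)) = (\<phi> k \<otimes> fst p, snd p)"
    using mult_mem_rcos_iff[OF subgroup_K k _ x, of "\<psi> (fst p)"] p kc
    by (auto simp: flip_T_def flip_T'_def group_hom.hom_mult[OF \<phi>_hom])
qed (auto simp: flip_T_def flip_T'_def m_assoc)

lemma \<iota>_inj: "inj_on \<iota> (carrier H)"
proof -
  interpret \<iota>: group_hom H G \<iota> by (rule \<iota>_hom)
  interpret A: hnn_action H K \<phi> "carrier H \<times> UNIV" "\<lambda>h p. (h \<otimes> fst p, snd p)" "flip_T \<one>" "flip_T' \<one>"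
    by (rule flip_action) simp
  have "h = \<one>" if "h \<in> carrier H" "\<iota> h = \<one>\<^bsub>G\<^esub>" for h
    using A.G_act_\<iota>[OF that(1), of "(\<one>, False)"] A.G_act_one[of "(\<one>, False)"] that by simp
  then show ?thesis using \<iota>.inj_on_one_iff by blast
qed

definition witness :: "'a \<Rightarrow> ('a + bool) list set" where
  "witness x = \<tau> \<otimes>\<^bsub>G\<^esub> \<iota> x \<otimes>\<^bsub>G\<^esub> inv\<^bsub>G\<^esub> \<tau> \<otimes>\<^bsub>G\<^esub> inv\<^bsub>G\<^esub> \<iota> (\<phi> x)"

lemma witness_ne_one:
  assumes x: "x \<in> carrier H" "x \<notin> K"
  shows "witness x \<noteq> \<one>\<^bsub>G\<^esub>"
proof
  assume one: "witness x = \<one>\<^bsub>G\<^esub>"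
  interpret G: group G by (rule group_HNN)
  interpret \<iota>: group_hom H G \<iota> by (rule \<iota>_hom)
  interpret A: hnn_action H K \<phi> "carrier H \<times> UNIV" "\<lambda>h p. (h \<otimes> fst p, snd p)" "flip_T x" "flip_T' x"
    by (rule flip_action[OF x(1)])
  have one_notin: "\<one> \<notin> K #> x"
  proof
    assume "\<one> \<in> K #> x"
    then have "inv x \<in> K" using subgroup.rcos_module[OF subgroup_K is_group x(1)] x by simp
    then show False using subgroup.m_inv_closed[OF subgroup_K, of "inv x"] x by simp
  qed
  let ?p = "(\<phi> x, False)"
  have "A.G_act (inv\<^bsub>G\<^esub> \<iota> (\<phi> x)) ?p = (\<one>, False)"
    using A.G_act_\<iota>[of "inv (\<phi> x)" ?p] \<iota>.hom_inv[of "\<phi> x"] x by simp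
  moreover have "A.G_act (inv\<^bsub>G\<^esub> \<tau>) (\<one>, False) = (\<one>, False)"
    using A.G_act_inv_\<tau> one_notin by (simp add: flip_T'_def group_hom.hom_one[OF \<psi>_hom])
  moreover have "A.G_act (\<iota> x) (\<one>, False) = (x, False)"
    using A.G_act_\<iota> x by simp
  moreover have "A.G_act \<tau> (x, False) = (\<phi> x, True)"
    using A.G_act_\<tau> x rcos_self[OF x(1) subgroup_K] by (simp add: flip_T_def)
  ultimately have "A.G_act (witness x) ?p = (\<phi> x, True)"
    using x \<tau>_in_carrier by (simp add: witness_def A.G_act_mult A.G_act_closed)
  then show False using one A.G_act_one[of "(\<phi> x, False)"] x by simp
qed

lemma witness_mult:
  assumes k: "k \<in> K" and m: "m \<in> carrier H"
  shows "witness (k \<otimes> m) = \<iota> (\<phi> k) \<otimes>\<^bsub>G\<^esub> witness m \<otimes>\<^bsub>G\<^esub> inv\<^bsub>G\<^esub> \<iota> (\<phi> k)"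
proof -
  interpret G: group G by (rule group_HNN)
  interpret \<iota>: group_hom H G \<iota> by (rule \<iota>_hom)
  have kc: "k \<in> carrier H" using k K_subset by blast
  have cancel: "inv\<^bsub>G\<^esub> \<tau> \<otimes>\<^bsub>G\<^esub> (\<tau> \<otimes>\<^bsub>G\<^esub> z) = z" if "z \<in> carrier G" for z
    using that \<tau>_in_carrier by (simp add: G.m_assoc[symmetric])
  have "witness (k \<otimes> m) = (\<tau> \<otimes>\<^bsub>G\<^esub> \<iota> k \<otimes>\<^bsub>G\<^esub> inv\<^bsub>G\<^esub> \<tau>) \<otimes>\<^bsub>G\<^esub> witness m \<otimes>\<^bsub>G\<^esub> inv\<^bsub>G\<^esub> \<iota> (\<phi> k)"
    using kc m \<tau>_in_carrier
    by (simp add: witness_def group_hom.hom_mult[OF \<phi>_hom] G.inv_mult_group G.m_assoc cancel)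
  then show ?thesis using \<tau>_conj[OF k] by simp
qed

lemma witness_mem_normal:
  assumes N: "N \<lhd> G" and m: "m \<in> carrier H" "\<iota> m \<in> N" "\<iota> (\<phi> m) \<in> N"
  shows "witness m \<in> N"
proof -
  interpret N: normal N G by (rule N)
  have "\<tau> \<otimes>\<^bsub>G\<^esub> \<iota> m \<otimes>\<^bsub>G\<^esub> inv\<^bsub>G\<^esub> \<tau> \<in> N" using N.inv_op_closed2[OF \<tau>_in_carrier m(2)] .
  then show ?thesis unfolding witness_def using m(3) N.m_closed N.m_inv_closed by blast
qed

lemma residually_finite_if_residually_finite_HNN:
  "residually_finite G \<Longrightarrow> residually_finite H"
  using residually_finite_if_inj_hom[OF \<iota>_hom \<iota>_inj] .

lemma residually_separable_if_residually_finite_HNN: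
  assumes RF: "residually_finite G"
  shows "residually_separable K H"
  unfolding residually_separable_def
proof
  fix x assume x: "x \<in> carrier H - K"
  interpret G: group G by (rule group_HNN)
  have "witness x \<in> carrier G"
    using x \<tau>_in_carrier group_hom.hom_closed[OF \<iota>_hom] by (simp add: witness_def)
  moreover have "witness x \<noteq> \<one>\<^bsub>G\<^esub>" using witness_ne_one x by blast
  ultimately obtain N where N: "finite_index_normal G N" "witness x \<notin> N"
    using RF unfolding residually_finite_def by blast
  have Nn: "N \<lhd> G" using N(1) unfolding finite_index_normal_def by blast
  let ?P = "{y \<in> carrier H. \<iota> y \<in> N}"
  let ?Q = "{y \<in> carrier H. \<phi> y \<in> ?P}"
  have P: "finite_index_normal H ?P" using finite_index_normal_vimage[OF \<iota>_hom N(1)] .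
  have Q: "finite_index_normal H ?Q" using finite_index_normal_vimage[OF \<phi>_hom P] .
  have "x \<notin> K <#> (?P \<inter> ?Q)"
  proof
    assume "x \<in> K <#> (?P \<inter> ?Q)"
    then obtain k m where km: "k \<in> K" "m \<in> ?P \<inter> ?Q" "x = k \<otimes> m" unfolding set_mult_def by blast
    have "witness m \<in> N" using witness_mem_normal[OF Nn] km(2) by simp
    moreover have "\<iota> (\<phi> k) \<in> carrier G"
      using km(1) K_subset group_hom.hom_closed[OF \<iota>_hom] by auto
    ultimately have "\<iota> (\<phi> k) \<otimes>\<^bsub>G\<^esub> witness m \<otimes>\<^bsub>G\<^esub> inv\<^bsub>G\<^esub> \<iota> (\<phi> k) \<in> N"
      using G.normal_invE(2)[OF Nn] by blast
    moreover have "witness x = \<iota> (\<phi> k) \<otimes>\<^bsub>G\<^esub> witness m \<otimes>\<^bsub>G\<^esub> inv\<^bsub>G\<^esub> \<iota> (\<phi> k)"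
      using witness_mult[OF km(1)] km by simp
    ultimately show False using N(2) by simp
  qed
  then show "\<exists>N. finite_index_normal H N \<and> x \<notin> K <#> N"
    using finite_index_normal_Int[OF P Q] by blast
qed

end

section \<open>Reduced words\<close>

fun t_count :: "('a + bool) list \<Rightarrow> nat" where
  "t_count [] = 0"
| "t_count (Inl h # s) = t_count s"
| "t_count (Inr b # s) = Suc (t_count s)"

lemma t_count_append [simp]: "t_count (u @ v) = t_count u + t_count v"
proof (induction u)
  case (Cons l u)
  then show ?case by (cases l) auto
qed simp

lemma t_letter_suffixes:
  assumes "u1 @ Inr e1 # s1 = u2 @ Inr e2 # s2"
  shows "s1 = s2 \<or> (\<exists>v. s1 = v @ Inr e2 # s2) \<or> (\<exists>v. s2 = v @ Inr e1 # s1)"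
proof -
  obtain us where "u1 = u2 @ us \<and> us @ Inr e1 # s1 = Inr e2 # s2 \<or> u1 @ us = u2 \<and> Inr e1 # s1 = us @ Inr e2 # s2"
    using append_eq_append_conv2[THEN iffD1, OF assms] by blast
  then show ?thesis by (cases us) auto
qed

context hnn
begin

definition reduced :: "('a + bool) list \<Rightarrow> bool" where
  "reduced w \<longleftrightarrow> (\<forall>u v a b. w \<noteq> u @ [Inl a, Inl b] @ v)
     \<and> (\<forall>u v e. w \<noteq> u @ [Inr e, Inr (\<not> e)] @ v)
     \<and> (\<forall>u v k. k \<in> K \<longrightarrow> w \<noteq> u @ [Inr True, Inl k, Inr False] @ v)
     \<and> (\<forall>u v k. k \<in> K \<longrightarrow> w \<noteq> u @ [Inr False, Inl (\<phi> k), Inr True] @ v)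
     \<and> (\<forall>u v. w \<noteq> u @ [Inl \<one>] @ v)"

lemma hnn_rel_conj_inv: "k \<in> K \<Longrightarrow> ([Inr False, Inl (\<phi> k), Inr True], [Inl k]) \<in> R"
proof -
  assume k: "k \<in> K"
  then have kc: "k \<in> carrier H" using K_subset by blast
  have "([Inr False] @ [Inl (\<phi> k)] @ [Inr True], [Inr False] @ [Inr True, Inl k, Inr False] @ [Inr True]) \<in> R"
    using hnn_rel.rel_sym[OF hnn_rel.ctxt[OF hnn_rel.rel_conj[OF k, where H = H], of "[Inr False]" "[Inr True]"]] by simp
  moreover have "([] @ [Inr False, Inr True] @ [Inl k, Inr False, Inr True], [] @ [] @ [Inl k, Inr False, Inr True]) \<in> R"
    using hnn_rel.ctxt[OF hnn_rel.t_inv2[where H = H and K = K and \<phi> = \<phi>], of "[]" "[Inl k, Inr False, Inr True]"] kc by simp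
  moreover have "([Inl k] @ [Inr False, Inr True] @ [], [Inl k] @ [] @ []) \<in> R"
    using hnn_rel.ctxt[OF hnn_rel.t_inv2[where H = H and K = K and \<phi> = \<phi>], of "[Inl k]" "[]"] kc by simp
  ultimately show ?thesis using hnn_rel.rel_trans by (metis append.left_neutral append_Cons append_Nil2)
qed

lemma exists_shorter_if_not_reduced:
  assumes w: "w \<in> W" and "\<not> reduced w"
  shows "\<exists>w'. (w, w') \<in> R \<and> length w' < length w"
proof -
  have shorten: "\<exists>w'. (w, w') \<in> R \<and> length w' < length w"
    if "w = u @ x @ v" "(x, x') \<in> R" "length x' < length x" for u x x' v
    using that hnn_rel.ctxt[OF that(2), of u v] w by auto
  from assms(2) consider
      (mult) u v a b where "w = u @ [Inl a, Inl b] @ v"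
    | (t_inv) u v e where "w = u @ [Inr e, Inr (\<not> e)] @ v"
    | (conj) u v k where "k \<in> K" "w = u @ [Inr True, Inl k, Inr False] @ v"
    | (conj_inv) u v k where "k \<in> K" "w = u @ [Inr False, Inl (\<phi> k), Inr True] @ v"
    | (one) u v where "w = u @ [Inl \<one>] @ v"
    unfolding reduced_def by blast
  then show ?thesis
  proof cases
    case mult
    then have "a \<in> carrier H" "b \<in> carrier H" using w by auto
    then show ?thesis using shorten[OF mult hnn_rel.rel_mult] by simp
  next
    case t_inv
    have "([Inr e, Inr (\<not> e)], []) \<in> R" using hnn_rel.t_inv1 hnn_rel.t_inv2 by (cases e) auto
    then show ?thesis using shorten[OF t_inv] by simp
  next
    case conj
    then show ?thesis using shorten[OF conj(2) hnn_rel.rel_conj[OF conj(1), where H = H]] by simp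
  next
    case conj_inv
    then show ?thesis using shorten[OF conj_inv(2) hnn_rel_conj_inv[OF conj_inv(1)]] by simp
  next
    case one
    then show ?thesis using shorten[OF one hnn_rel.rel_one[where H = H and K = K and \<phi> = \<phi>]] by simp
  qed
qed

lemma exists_reduced_word:
  assumes "A \<in> carrier G"
  obtains w where "w \<in> W" "A = cls w" "reduced w"
proof -
  obtain u where u: "u \<in> W" "A = cls u" using assms by (elim carrier_HNN_cases)
  then have "u \<in> A" using hnn_rel.rel_refl by blast
  then obtain w where w: "w \<in> A" "\<And>y. y \<in> A \<Longrightarrow> length w \<le> length y"
    using ex_has_least_nat[of "\<lambda>w. w \<in> A" u length] by blast
  have uw: "(u, w) \<in> R" using w(1) u(2) by simp
  then have w_word: "w \<in> W" using hnn_rel_words by blast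
  have A: "A = cls w" using u uw cls_eq_iff w_word by simp
  have "reduced w"
  proof (rule ccontr)
    assume "\<not> reduced w"
    then obtain w' where "(w, w') \<in> R" "length w' < length w"
      using exists_shorter_if_not_reduced w_word by blast
    then show False using w(2)[of w'] A by simp
  qed
  then show ?thesis using that w_word A by blast
qed

lemma t_free_infix_of_reduced:
  assumes "reduced (u @ v @ u')" and "t_count v = 0"
  shows "v = [] \<or> (\<exists>h. v = [Inl h])"
proof (cases v)
  case (Cons l v')
  then obtain h where h: "l = Inl h" using assms(2) by (cases l) auto
  show ?thesis
  proof (cases v')
    case (Cons l2 v'')
    then obtain h2 where "l2 = Inl h2" using assms(2) \<open>v = l # v'\<close> h by (cases l2) auto
    then have "u @ v @ u' = u @ [Inl h, Inl h2] @ (v'' @ u')" using Cons \<open>v = l # v'\<close> h by simp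
    then show ?thesis using assms(1) unfolding reduced_def by blast
  qed (simp add: Cons h)
qed simp

lemma reduced_t_free:
  assumes "reduced w" "w \<in> W" "t_count w = 0"
  shows "w = [] \<or> (\<exists>h. w = [Inl h] \<and> h \<in> carrier H \<and> h \<noteq> \<one>)"
proof -
  have "w = [] \<or> (\<exists>h. w = [Inl h])" using t_free_infix_of_reduced[of "[]" w "[]"] assms by simp
  moreover have "w \<noteq> [] @ [Inl \<one>] @ []" using assms(1) unfolding reduced_def by blast
  ultimately show ?thesis using assms(2) by auto
qed

lemma reduced_opposite_t_letters:
  assumes red: "reduced w" and w: "w \<in> W"
    and d1: "w = u1 @ Inr e # s1" and d2: "w = u2 @ Inr (\<not> e) # s2"
    and count: "t_count s1 = Suc (t_count s2)"
  obtains h where "h \<in> carrier H" "s1 = Inl h # Inr (\<not> e) # s2"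
    "w = u1 @ [Inr e, Inl h, Inr (\<not> e)] @ s2"
proof -
  from t_letter_suffixes[of u1 e s1 u2 "\<not> e" s2]
  obtain v where v: "s1 = v @ Inr (\<not> e) # s2"
    using d1 d2 count by auto
  then have "t_count v = 0" using count by simp
  then have "v = [] \<or> (\<exists>h. v = [Inl h])"
    using t_free_infix_of_reduced[of "u1 @ [Inr e]" v "Inr (\<not> e) # s2"] red d1 v by simp
  moreover have "v \<noteq> []"
  proof
    assume "v = []"
    then have "w = u1 @ [Inr e, Inr (\<not> e)] @ s2" using d1 v by simp
    then show False using red unfolding reduced_def by blast
  qed
  ultimately obtain h where "v = [Inl h]" by blast
  then show ?thesis using that d1 v w by auto
qed

end

section \<open>Finite actions detecting a reduced word\<close>

context hnn
begin

text \<open>The coset reached from \<open>M\<close> under the word \<open>s\<close> in the permutation action of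
  \<open>hnn_perm\<close> below is \<open>M (hcoord s)\<close>, since there \<open>t\<close> maps \<open>M y\<close> to \<open>M \<phi>(y)\<close>.\<close>
fun hcoord :: "('a + bool) list \<Rightarrow> 'a" where
  "hcoord [] = \<one>"
| "hcoord (Inl h # s) = h \<otimes> hcoord s"
| "hcoord (Inr b # s) = (if b then \<phi> (hcoord s) else \<psi> (hcoord s))"

lemma hcoord_closed: "s \<in> W \<Longrightarrow> hcoord s \<in> carrier H"
proof (induction s)
  case (Cons l s)
  then show ?case by (cases l) auto
qed simp

definition enclosed_letters :: "('a + bool) list \<Rightarrow> 'a set" where
  "enclosed_letters w = {h. \<exists>u v. w = u @ [Inr True, Inl h, Inr False] @ v}
     \<union> \<psi> ` {h. \<exists>u v. w = u @ [Inr False, Inl h, Inr True] @ v}"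

lemma finite_enclosed_letters: "finite (enclosed_letters w)"
proof -
  have "finite {h. Inl h \<in> set w}"
    using finite_vimageI[OF finite_set[of w], of Inl] by (simp add: vimage_def)
  moreover have "{h. \<exists>u v. w = u @ [Inr e, Inl h, Inr e'] @ v} \<subseteq> {h. Inl h \<in> set w}" for e e'
    by auto
  ultimately show ?thesis unfolding enclosed_letters_def by (meson finite_Un finite_imageI finite_subset)
qed

lemma enclosed_letters_reduced:
  assumes "w \<in> W" "reduced w"
  shows "enclosed_letters w \<subseteq> carrier H - K"
proof
  fix b assume "b \<in> enclosed_letters w"
  then consider (T) u v where "w = u @ [Inr True, Inl b, Inr False] @ v"
    | (F) h u v where "b = \<psi> h" "w = u @ [Inr False, Inl h, Inr True] @ v"
    unfolding enclosed_letters_def by blast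
  then show "b \<in> carrier H - K"
  proof cases
    case T
    then have "b \<notin> K" using assms(2) unfolding reduced_def by blast
    moreover have "b \<in> carrier H" using T assms(1) by simp
    ultimately show ?thesis by blast
  next
    case F
    then have h: "h \<in> carrier H" using assms(1) by simp
    then have "w = u @ [Inr False, Inl (\<phi> (\<psi> h)), Inr True] @ v" using F by simp
    then have "\<psi> h \<notin> K" using assms(2) unfolding reduced_def by blast
    then show ?thesis using F h by simp
  qed
qed

lemma exists_invariant_normal_separating:
  assumes fg: "finitely_generated H" and RF: "residually_finite H"
    and sep: "residually_separable K H"
    and B: "finite B" "B \<subseteq> carrier H - K" and z: "z \<in> carrier H"
  obtains M where "finite_index_normal H M" "\<phi> ` M = M" "z \<noteq> \<one> \<Longrightarrow> z \<notin> M"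
    "\<And>b. b \<in> B \<Longrightarrow> b \<notin> K <#> M"
proof -
  obtain N\<^sub>z where N\<^sub>z: "finite_index_normal H N\<^sub>z" "z \<noteq> \<one> \<Longrightarrow> z \<notin> N\<^sub>z"
    using RF z finite_index_normal_carrier unfolding residually_finite_def by blast
  obtain N\<^sub>b where N\<^sub>b: "\<And>b. b \<in> B \<Longrightarrow> finite_index_normal H (N\<^sub>b b) \<and> b \<notin> K <#> N\<^sub>b b"
    using sep B(2) unfolding residually_separable_def by (metis subsetD)
  have N: "finite_index_normal H (\<Inter>(insert N\<^sub>z (N\<^sub>b ` B)))"
    using B(1) N\<^sub>z(1) N\<^sub>b by (intro finite_index_normal_Inter) auto
  obtain M where M: "finite_index_normal H M" "M \<subseteq> \<Inter>(insert N\<^sub>z (N\<^sub>b ` B))"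
    and invariant: "\<forall>\<theta>\<in>hom H H. \<theta> ` M \<subseteq> M"
    using finite_index_normal_fully_invariant_subgroup[OF fg N] by blast
  have "M \<subseteq> carrier H" using finite_index_normal_subset_carrier[OF M(1)] .
  then have "M = \<phi> ` \<psi> ` M" by (force simp: image_image subsetD)
  also have "\<dots> \<subseteq> \<phi> ` M" using invariant \<psi>_iso unfolding iso_def by blast
  finally have "\<phi> ` M = M" using invariant \<phi>_iso unfolding iso_def by blast
  moreover have "b \<notin> K <#> M" if "b \<in> B" for b
    using N\<^sub>b[OF that] mono_set_mult[of K K M "N\<^sub>b b"] M(2) that by blast
  ultimately show ?thesis using that M N\<^sub>z by blast
qed

end

locale hnn_perm = hnn +
  fixes M :: "'a set" and n :: nat and \<sigma> :: "'a set \<Rightarrow> nat \<Rightarrow> nat"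
  assumes M_normal: "M \<lhd> H" and M_finite: "finite (rcosets M)" and M_invariant: "\<phi> ` M = M"
    and \<sigma>_bij: "bij_betw (\<sigma> \<kappa>) {..n} {..n}"
begin

text \<open>The level permutation applied by \<open>t\<close> at the coset \<open>Y\<close> depends only on \<open>K Y\<close>, and
  \<open>K k Y = K Y\<close> for \<open>k \<in> K\<close>; this is what makes \<open>t k t\<inverse> = \<phi> k\<close> hold.\<close>
definition perm_X :: "('a set \<times> nat) set" where "perm_X = (rcosets M) \<times> {..n}"

definition perm_\<alpha> :: "'a \<Rightarrow> 'a set \<times> nat \<Rightarrow> 'a set \<times> nat" where
  "perm_\<alpha> h p = (h <# fst p, snd p)"

definition perm_T :: "'a set \<times> nat \<Rightarrow> 'a set \<times> nat" where
  "perm_T p = (\<phi> ` fst p, \<sigma> (K <#> fst p) (snd p))"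

definition perm_T' :: "'a set \<times> nat \<Rightarrow> 'a set \<times> nat" where
  "perm_T' p = (\<psi> ` fst p, inv_into {..n} (\<sigma> (K <#> \<psi> ` fst p)) (snd p))"

lemma M_subset: "M \<subseteq> carrier H"
  using M_normal normal_imp_subgroup subgroup.subset by blast

lemma \<phi>_image_rcos:
  assumes "y \<in> carrier H" shows "\<phi> ` (M #> y) = M #> \<phi> y"
proof -
  have "\<phi> \<in> hom H H" using \<phi>_iso unfolding iso_def by blast
  from coset_hom(2)[OF this M_subset assms] show ?thesis using M_invariant by simp
qed

lemma \<psi>_image_rcos:
  assumes "y \<in> carrier H" shows "\<psi> ` (M #> y) = M #> \<psi> y"
proof -
  have "\<psi> ` M = \<psi> ` \<phi> ` M" using M_invariant by simp
  also have "\<dots> = (\<lambda>x. \<psi> (\<phi> x)) ` M" by (simp only: image_image)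
  also have "\<dots> = (\<lambda>x. x) ` M" using M_subset by (intro image_cong) auto
  finally have "\<psi> ` M = M" by simp
  moreover have "\<psi> \<in> hom H H" using \<psi>_iso unfolding iso_def by blast
  from coset_hom(2)[OF this M_subset assms] show ?thesis using \<open>\<psi> ` M = M\<close> by simp
qed

lemma \<sigma>_le: "i \<le> n \<Longrightarrow> \<sigma> \<kappa> i \<le> n"
  using \<sigma>_bij bij_betw_apply by fastforce

lemma \<sigma>_inv_le: "i \<le> n \<Longrightarrow> inv_into {..n} (\<sigma> \<kappa>) i \<le> n"
  using \<sigma>_bij by (metis atMost_iff bij_betw_def inv_into_into)

lemma \<sigma>_\<sigma>_inv: "i \<le> n \<Longrightarrow> \<sigma> \<kappa> (inv_into {..n} (\<sigma> \<kappa>) i) = i"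
  using \<sigma>_bij by (metis atMost_iff bij_betw_inv_into_right)

lemma \<sigma>_inv_\<sigma>: "i \<le> n \<Longrightarrow> inv_into {..n} (\<sigma> \<kappa>) (\<sigma> \<kappa> i) = i"
  using \<sigma>_bij by (metis atMost_iff bij_betw_inv_into_left)

lemma perm_XE:
  assumes "p \<in> perm_X" obtains y i where "y \<in> carrier H" "i \<le> n" "p = (M #> y, i)"
  using assms unfolding perm_X_def RCOSETS_def by auto

lemma rcos_in_perm_X: "y \<in> carrier H \<Longrightarrow> i \<le> n \<Longrightarrow> (M #> y, i) \<in> perm_X"
  unfolding perm_X_def using rcosetsI[OF M_subset] by simp

lemma finite_perm_X: "finite perm_X"
  unfolding perm_X_def using M_finite by simp

sublocale hnn_action H K \<phi> perm_X perm_\<alpha> perm_T perm_T'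
proof unfold_locales
  fix h p assume "h \<in> carrier H" "p \<in> perm_X"
  then show "perm_\<alpha> h p \<in> perm_X"
    by (elim perm_XE) (simp add: perm_\<alpha>_def normal_lcos_rcos[OF M_normal] rcos_in_perm_X)
next
  fix h h' p assume "h \<in> carrier H" "h' \<in> carrier H" "p \<in> perm_X"
  then show "perm_\<alpha> (h \<otimes> h') p = perm_\<alpha> h (perm_\<alpha> h' p)"
    by (elim perm_XE) (simp add: perm_\<alpha>_def normal_lcos_rcos[OF M_normal] m_assoc)
next
  fix p assume "p \<in> perm_X"
  then show "perm_\<alpha> \<one> p = p"
    by (elim perm_XE) (simp add: perm_\<alpha>_def normal_lcos_rcos[OF M_normal])
next
  fix p assume "p \<in> perm_X"
  then show "perm_T p \<in> perm_X"
    by (elim perm_XE) (simp add: perm_T_def \<phi>_image_rcos rcos_in_perm_X \<sigma>_le)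
next
  fix p assume "p \<in> perm_X"
  then show "perm_T' p \<in> perm_X"
    by (elim perm_XE) (simp add: perm_T'_def \<psi>_image_rcos rcos_in_perm_X \<sigma>_inv_le)
next
  fix p assume "p \<in> perm_X"
  then show "perm_T (perm_T' p) = p"
    by (elim perm_XE) (simp add: perm_T_def perm_T'_def \<phi>_image_rcos \<psi>_image_rcos \<sigma>_\<sigma>_inv)
next
  fix p assume "p \<in> perm_X"
  then show "perm_T' (perm_T p) = p"
    by (elim perm_XE) (simp add: perm_T_def perm_T'_def \<phi>_image_rcos \<psi>_image_rcos \<sigma>_inv_\<sigma>)
next
  fix k p assume k: "k \<in> K" and "p \<in> perm_X"
  then obtain y i where y: "y \<in> carrier H" "i \<le> n" "p = (M #> y, i)" by (elim perm_XE)
  have kc: "k \<in> carrier H" using k K_subset by blast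
  have "K <#> (k <# (M #> \<psi> y)) = K <#> (M #> \<psi> y)"
    using set_mult_lcos_absorb[OF subgroup_K k] r_coset_subset_G[OF M_subset] y by simp
  then show "perm_T (perm_\<alpha> k (perm_T' p)) = perm_\<alpha> (\<phi> k) p"
    using y kc by (simp add: perm_T_def perm_T'_def perm_\<alpha>_def \<psi>_image_rcos \<phi>_image_rcos \<sigma>_\<sigma>_inv
        normal_lcos_rcos[OF M_normal] group_hom.hom_mult[OF \<phi>_hom])
qed

lemma trajectory:
  assumes w: "w \<in> W" "t_count w \<le> n"
    and step_T: "\<And>u s. w = u @ Inr True # s \<Longrightarrow> \<sigma> (K <#> (M #> hcoord s)) (t_count s) = Suc (t_count s)"
    and step_F: "\<And>u s. w = u @ Inr False # s \<Longrightarrow>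
      \<sigma> (K <#> (M #> \<psi> (hcoord s))) (Suc (t_count s)) = t_count s"
  shows "w = u @ s \<Longrightarrow> act s (M, 0) = (M #> hcoord s, t_count s)"
proof (induction s arbitrary: u)
  case Nil
  then show ?case using coset_mult_one[OF M_subset] by simp
next
  case (Cons l s)
  then have s: "s \<in> W" "hcoord s \<in> carrier H" using w(1) hcoord_closed by (cases l; simp)+
  have IH: "act s (M, 0) = (M #> hcoord s, t_count s)" using Cons.IH[of "u @ [l]"] Cons.prems by simp
  have count: "t_count (l # s) \<le> n" using w(2) Cons.prems by simp
  show ?case
  proof (cases l)
    case (Inl h)
    then have h: "h \<in> carrier H" using Cons.prems w(1) by simp
    have "act (l # s) (M, 0) = perm_\<alpha> h (M #> hcoord s, t_count s)" using Inl IH by simp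
    also have "\<dots> = (M #> hcoord (l # s), t_count (l # s))"
      using Inl h s(2) by (simp add: perm_\<alpha>_def normal_lcos_rcos[OF M_normal])
    finally show ?thesis .
  next
    case (Inr b)
    show ?thesis
    proof (cases b)
      case True
      have "w = u @ Inr True # s" using Cons.prems Inr True by simp
      note step = step_T[OF this]
      have "act (l # s) (M, 0) = perm_T (M #> hcoord s, t_count s)" using Inr True IH by simp
      also have "\<dots> = (M #> hcoord (l # s), t_count (l # s))"
        using Inr True s(2) step by (simp add: perm_T_def \<phi>_image_rcos)
      finally show ?thesis .
    next
      case False
      have "w = u @ Inr False # s" using Cons.prems Inr False by simp
      then have "inv_into {..n} (\<sigma> (K <#> (M #> \<psi> (hcoord s)))) (t_count s) = Suc (t_count s)"
        using \<sigma>_inv_\<sigma> count step_F Inr by (metis t_count.simps(3))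
      then have "perm_T' (M #> hcoord s, t_count s) = (M #> hcoord (l # s), t_count (l # s))"
        using Inr False s(2) by (simp add: perm_T'_def \<psi>_image_rcos)
      moreover have "act (l # s) (M, 0) = perm_T' (M #> hcoord s, t_count s)" using Inr False IH by simp
      ultimately show ?thesis by simp
    qed
  qed
qed

end

locale hnn_reduced_word = hnn +
  fixes w :: "('a + bool) list" and M :: "'a set"
  assumes w_word: "w \<in> W" and w_reduced: "reduced w"
    and M_normal: "M \<lhd> H" and M_finite: "finite (rcosets M)" and M_invariant: "\<phi> ` M = M"
    and M_separates: "b \<in> enclosed_letters w \<Longrightarrow> b \<notin> K <#> M"
begin

text \<open>The constraint on the level permutation of the double coset \<open>\<kappa>\<close> imposed by the letter
  \<open>t\<^sup>\<plusminus>\<^sup>1\<close> followed by the suffix \<open>s\<close> of \<open>w\<close>, in the form \<open>(\<kappa>, source level, target level)\<close>.\<close>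
definition t_step :: "bool \<Rightarrow> ('a + bool) list \<Rightarrow> 'a set \<times> nat \<times> nat" where
  "t_step e s = (K <#> (M #> (if e then hcoord s else \<psi> (hcoord s))),
     if e then t_count s else Suc (t_count s), if e then Suc (t_count s) else t_count s)"

definition t_steps :: "('a set \<times> nat \<times> nat) set" where
  "t_steps = {t_step e s |u e s. w = u @ Inr e # s}"

lemma t_step_mem: "w = u @ Inr e # s \<Longrightarrow> t_step e s \<in> t_steps"
  unfolding t_steps_def by blast

lemma t_step_double_cosets_ne:
  assumes "w = u1 @ Inr e # s1" "w = u2 @ Inr (\<not> e) # s2" "t_count s1 = Suc (t_count s2)"
  shows "fst (t_step e s1) \<noteq> fst (t_step (\<not> e) s2)"
proof -
  obtain h where h: "h \<in> carrier H" "s1 = Inl h # Inr (\<not> e) # s2"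
    and w: "w = u1 @ [Inr e, Inl h, Inr (\<not> e)] @ s2"
    using reduced_opposite_t_letters[OF w_reduced w_word assms] by blast
  have s2: "hcoord s2 \<in> carrier H" using hcoord_closed w w_word by simp
  show ?thesis
  proof (cases e)
    case True
    then have "h \<in> enclosed_letters w" using w unfolding enclosed_letters_def by auto
    then show ?thesis using double_coset_mult_ne[OF subgroup_K M_normal h(1) M_separates] s2 h True
      by (simp add: t_step_def)
  next
    case False
    then have "\<exists>u v. w = u @ [Inr False, Inl h, Inr True] @ v" using w by auto
    then have "\<psi> h \<in> enclosed_letters w" unfolding enclosed_letters_def by blast
    moreover have "\<psi> (hcoord s1) = \<psi> h \<otimes> hcoord s2"
      using h False s2 group_hom.hom_mult[OF \<psi>_hom, of h "\<phi> (hcoord s2)"] by simp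
    ultimately show ?thesis using double_coset_mult_ne[OF subgroup_K M_normal _ M_separates] s2 h False
      by (simp add: t_step_def)
  qed
qed

lemma t_steps_source_iff_target:
  assumes "(\<kappa>, a, b) \<in> t_steps" "(\<kappa>, a', b') \<in> t_steps"
  shows "a = a' \<longleftrightarrow> b = b'"
proof -
  obtain u1 e1 s1 where w1: "w = u1 @ Inr e1 # s1" and step1: "t_step e1 s1 = (\<kappa>, a, b)"
    using assms(1) unfolding t_steps_def by auto
  obtain u2 e2 s2 where w2: "w = u2 @ Inr e2 # s2" and step2: "t_step e2 s2 = (\<kappa>, a', b')"
    using assms(2) unfolding t_steps_def by auto
  note w = w1 w2 and steps = step1 step2
  show ?thesis
  proof (cases "e2 = e1")
    case True
    then show ?thesis using steps by (auto simp: t_step_def split: if_splits)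
  next
    case False
    then have "t_count s1 \<noteq> Suc (t_count s2)" "t_count s2 \<noteq> Suc (t_count s1)"
      using t_step_double_cosets_ne[of u1 e1 s1 u2 s2] t_step_double_cosets_ne[of u2 e2 s2 u1 s1]
        w steps by auto
    then show ?thesis using False steps by (auto simp: t_step_def split: if_splits)
  qed
qed

lemma t_steps_bounded: "(\<kappa>, a, b) \<in> t_steps \<Longrightarrow> a \<le> t_count w \<and> b \<le> t_count w"
  unfolding t_steps_def t_step_def by auto

lemma exists_level_permutations:
  obtains \<sigma> where "\<And>\<kappa>. bij_betw (\<sigma> \<kappa>) {..t_count w} {..t_count w}"
    "\<And>\<kappa> a b. (\<kappa>, a, b) \<in> t_steps \<Longrightarrow> \<sigma> \<kappa> a = b"
proof -
  have "\<exists>\<sigma>. bij_betw \<sigma> {..t_count w} {..t_count w} \<and> (\<forall>(a, b)\<in>{(a, b). (\<kappa>, a, b) \<in> t_steps}. \<sigma> a = b)"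
    for \<kappa>
  proof (rule bij_betw_extending_partial_bij)
    show "{(a, b). (\<kappa>, a, b) \<in> t_steps} \<subseteq> {..t_count w} \<times> {..t_count w}"
      using t_steps_bounded by auto
    show "single_valued {(a, b). (\<kappa>, a, b) \<in> t_steps}"
      by (simp add: single_valued_def) (metis t_steps_source_iff_target)
    show "single_valued ({(a, b). (\<kappa>, a, b) \<in> t_steps}\<inverse>)"
      by (simp add: single_valued_def) (metis t_steps_source_iff_target)
  qed simp
  then have "\<forall>\<kappa>. \<exists>\<sigma>. bij_betw \<sigma> {..t_count w} {..t_count w} \<and>
      (\<forall>(a, b)\<in>{(a, b). (\<kappa>, a, b) \<in> t_steps}. \<sigma> a = b)" by blast
  from choice[OF this] obtain \<sigma> where "\<forall>\<kappa>. bij_betw (\<sigma> \<kappa>) {..t_count w} {..t_count w} \<and>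
      (\<forall>(a, b)\<in>{(a, b). (\<kappa>, a, b) \<in> t_steps}. \<sigma> \<kappa> a = b)" by blast
  then show ?thesis by (intro that[of \<sigma>]) auto
qed

lemma exists_finite_index_normal_avoiding:
  assumes "w \<noteq> []" and "hcoord w \<noteq> \<one> \<Longrightarrow> hcoord w \<notin> M"
  shows "\<exists>N. finite_index_normal G N \<and> cls w \<notin> N"
proof -
  obtain \<sigma> where \<sigma>: "\<And>\<kappa>. bij_betw (\<sigma> \<kappa>) {..t_count w} {..t_count w}"
    "\<And>\<kappa> a b. (\<kappa>, a, b) \<in> t_steps \<Longrightarrow> \<sigma> \<kappa> a = b"
    using exists_level_permutations by blast
  interpret P: hnn_perm H K \<phi> M "t_count w" \<sigma>
    by (rule hnn_perm.intro[OF hnn_axioms hnn_perm_axioms.intro[OF M_normal M_finite M_invariant \<sigma>(1)]])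
  have "P.act w (M, 0) = (M #> hcoord w, t_count w)"
  proof (rule P.trajectory[OF w_word order_refl, of "[]"])
    fix u s assume "w = u @ Inr True # s"
    then have "(K <#> (M #> hcoord s), t_count s, Suc (t_count s)) \<in> t_steps"
      using t_step_mem by (fastforce simp: t_step_def)
    then show "\<sigma> (K <#> (M #> hcoord s)) (t_count s) = Suc (t_count s)" by (rule \<sigma>(2))
  next
    fix u s assume "w = u @ Inr False # s"
    then have "(K <#> (M #> \<psi> (hcoord s)), Suc (t_count s), t_count s) \<in> t_steps"
      using t_step_mem by (fastforce simp: t_step_def)
    then show "\<sigma> (K <#> (M #> \<psi> (hcoord s))) (Suc (t_count s)) = t_count s" by (rule \<sigma>(2))
  qed simp
  moreover have base: "(M, 0) \<in> P.perm_X"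
    using P.rcos_in_perm_X[of \<one> 0] coset_mult_one[OF P.M_subset] by simp
  ultimately have image: "P.G_act (cls w) (M, 0) = (M #> hcoord w, t_count w)"
    using P.G_act_cls[OF w_word] by simp
  have "(M #> hcoord w, t_count w) \<noteq> (M, 0)"
  proof (cases "t_count w = 0")
    case True
    then obtain h where h: "w = [Inl h]" "h \<in> carrier H" "h \<noteq> \<one>"
      using reduced_t_free[OF w_reduced w_word] assms(1) by blast
    then have "h \<in> M #> h" "h \<notin> M" using assms(2) rcos_self[OF h(2)] M_normal normal_imp_subgroup by auto
    then show ?thesis using h by auto
  qed simp
  then have "P.G_act (cls w) (M, 0) \<noteq> (M, 0)" using image by simp
  then have "cls w \<notin> {A \<in> carrier G. \<forall>p\<in>P.perm_X. P.G_act A p = p}" using base by blast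
  then show ?thesis using P.finite_index_normal_G_act_kernel P.finite_perm_X by blast
qed

end

context hnn
begin

lemma residually_finite_HNN_if_separable:
  assumes fg: "finitely_generated H" and RF: "residually_finite H" and sep: "residually_separable K H"
  shows "residually_finite G"
  unfolding residually_finite_def
proof (intro ballI impI)
  fix g assume g: "g \<in> carrier G" "g \<noteq> \<one>\<^bsub>G\<^esub>"
  obtain w where w: "w \<in> W" "g = cls w" "reduced w" using exists_reduced_word[OF g(1)] .
  obtain M where M: "finite_index_normal H M" "\<phi> ` M = M" "hcoord w \<noteq> \<one> \<Longrightarrow> hcoord w \<notin> M"
    "\<And>b. b \<in> enclosed_letters w \<Longrightarrow> b \<notin> K <#> M"
    using exists_invariant_normal_separating[OF fg RF sep finite_enclosed_letters
        enclosed_letters_reduced[OF w(1,3)] hcoord_closed[OF w(1)]] by blast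
  have "M \<lhd> H" "finite (rcosets M)" using M(1) unfolding finite_index_normal_def by auto
  then interpret hnn_reduced_word H K \<phi> w M
    using hnn_reduced_word.intro[OF hnn_axioms hnn_reduced_word_axioms.intro[OF w(1,3) _ _ M(2,4)]]
    by blast
  have "w \<noteq> []" using g w one_HNN by auto
  then show "\<exists>N. finite_index_normal G N \<and> g \<notin> N"
    using exists_finite_index_normal_avoiding M(3) w(2) by blast
qed

end

theorem theoremA:
  fixes H :: "('a, 'b) monoid_scheme" and K :: "'a set" and \<phi> :: "'a \<Rightarrow> 'a"
  assumes "group H"
    and "finitely_generated H"
    and "\<phi> \<in> iso H H"
    and "subgroup K H" and "K \<noteq> carrier H"
  shows "residually_finite (HNN H K \<phi>) \<longleftrightarrow>
         (residually_finite H \<and> residually_separable K H)"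
proof -
  interpret hnn H K \<phi>
    using assms(1,3,4) by (simp add: hnn_def hnn_axioms_def)
  show ?thesis
    using residually_finite_if_residually_finite_HNN residually_separable_if_residually_finite_HNN
      residually_finite_HNN_if_separable[OF assms(2)] by blast
qed

end
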